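(* Let $\alpha=\alpha(0)$ be a graph function on a strongly connected digraph $G$, fix a fair infinite sequence of raising operations, and let $\alpha(t)$ and $r(t)$ be the resulting graph functions and raising vectors. Then the sequence $r(t)$ is (coordinatewise) non-decreasing and bounded above, and hence converges to a limit vector $r^*$ as $t\to\infty$.
   Context: $G$ is a strongly connected directed graph on vertex set $\{1,\dots,n\}$ (self-loops allowed); a graph function assigns a real weight $\alpha_{uv}$ to each edge. $\alpha_v^{\text{in}}=\max_{u:(u,v)\in G}\alpha_{uv}$, $\alpha_v^{\text{out}}=\max_{w:(v,w)\in G}\alpha_{vw}$, $\rho^R_v=\max\{0,\alpha_v^{\text{out}}-\alpha_v^{\text{in}}\}$. A raising operation at $v$: if $\rho^R_v>0$, add $\rho^R_v/2$ to each $\alpha_{uv}$ ($u\ne v$) and subtract $\rho^R_v/2$ from each $\alpha_{vw}$ ($w\ne v$), self-loop unchanged; otherwise do nothing. A sequence of operations is fair if every vertex occurs infinitely often. The raising vector is defined by $r(0)=0$ and, if the $t$-th operation is at vertex $v$, $r_v(t)=r_v(t-1)+\rho^R_v/2$ (with $\rho^R_v$ computed in $\alpha(t-1)$) and $r_u(t)=r_u(t-1)$ for $u\ne v$; thus $\alpha_{uv}(t)=\alpha_{uv}(0)+r_v(t)-r_u(t)$. *)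

theory Defs
  imports Complex_Main
begin

text \<open>Vertices are 1..n; a digraph G is a set of edges (pairs of vertices), self-loops allowed.
A graph function is a map alpha :: nat => nat => real; only its values on edges of G matter.\<close>

definition digraph_on :: "nat \<Rightarrow> (nat \<times> nat) set \<Rightarrow> bool" where
  "digraph_on n G \<longleftrightarrow> G \<subseteq> {1..n} \<times> {1..n}"

definition strongly_connected :: "nat \<Rightarrow> (nat \<times> nat) set \<Rightarrow> bool" where
  "strongly_connected n G \<longleftrightarrow> (\<forall>u\<in>{1..n}. \<forall>v\<in>{1..n}. (u, v) \<in> G\<^sup>*)"

definition alpha_in :: "(nat \<times> nat) set \<Rightarrow> (nat \<Rightarrow> nat \<Rightarrow> real) \<Rightarrow> nat \<Rightarrow> real" where
  "alpha_in G \<alpha> v = Max {\<alpha> u v | u. (u, v) \<in> G}"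

definition alpha_out :: "(nat \<times> nat) set \<Rightarrow> (nat \<Rightarrow> nat \<Rightarrow> real) \<Rightarrow> nat \<Rightarrow> real" where
  "alpha_out G \<alpha> v = Max {\<alpha> v w | w. (v, w) \<in> G}"

definition rhoR :: "(nat \<times> nat) set \<Rightarrow> (nat \<Rightarrow> nat \<Rightarrow> real) \<Rightarrow> nat \<Rightarrow> real" where
  "rhoR G \<alpha> v = max 0 (alpha_out G \<alpha> v - alpha_in G \<alpha> v)"

definition raise :: "(nat \<times> nat) set \<Rightarrow> (nat \<Rightarrow> nat \<Rightarrow> real) \<Rightarrow> nat \<Rightarrow> (nat \<Rightarrow> nat \<Rightarrow> real)" where
  "raise G \<alpha> v =
     (if rhoR G \<alpha> v > 0 then
        (\<lambda>x y. if (x, y) \<in> G \<and> y = v \<and> x \<noteq> v then \<alpha> x y + rhoR G \<alpha> v / 2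
               else if (x, y) \<in> G \<and> x = v \<and> y \<noteq> v then \<alpha> x y - rhoR G \<alpha> v / 2
               else \<alpha> x y)
      else \<alpha>)"

text \<open>The operation sequence: the t-th operation (t \<ge> 1) is at vertex s t.\<close>
fun alpha_seq :: "(nat \<times> nat) set \<Rightarrow> (nat \<Rightarrow> nat \<Rightarrow> real) \<Rightarrow> (nat \<Rightarrow> nat) \<Rightarrow> nat \<Rightarrow> (nat \<Rightarrow> nat \<Rightarrow> real)" where
  "alpha_seq G \<alpha>0 s 0 = \<alpha>0"
| "alpha_seq G \<alpha>0 s (Suc t) = raise G (alpha_seq G \<alpha>0 s t) (s (Suc t))"

fun r_seq :: "(nat \<times> nat) set \<Rightarrow> (nat \<Rightarrow> nat \<Rightarrow> real) \<Rightarrow> (nat \<Rightarrow> nat) \<Rightarrow> nat \<Rightarrow> (nat \<Rightarrow> real)" where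
  "r_seq G \<alpha>0 s 0 = (\<lambda>_. 0)"
| "r_seq G \<alpha>0 s (Suc t) =
     (r_seq G \<alpha>0 s t)(s (Suc t) := r_seq G \<alpha>0 s t (s (Suc t))
                          + rhoR G (alpha_seq G \<alpha>0 s t) (s (Suc t)) / 2)"

definition fair :: "nat \<Rightarrow> (nat \<Rightarrow> nat) \<Rightarrow> bool" where
  "fair n s \<longleftrightarrow> (\<forall>t\<ge>1. s t \<in> {1..n}) \<and> (\<forall>v\<in>{1..n}. infinite {t. s t = v})"

end

theory Submission imports Defs begin

(* Monotonicity is immediate from rhoR >= 0. For boundedness, let l be the maximal mean weight
   of a closed walk in G and let p v be the largest weight, shifted by -l per edge, of a walk to v
   starting on a closed walk of mean l (a max-plus eigenvector of alpha). Then B = max p - p is a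
   nonnegative potential for which alpha' u v = alpha u v + B v - B u is balanced: at every vertex
   all outgoing weights are at most l and some incoming weight is at least l. Since
   alpha(t) u v = alpha u v + r(t) v - r(t) u, an induction on t gives r(t) <= B: as long as
   r(t) <= B, alpha(t) differs from alpha' by at most B v - r(t) v on the edges at v, so a raising
   step at v adds at most B v - r(t) v. *)

definition walk :: "nat \<Rightarrow> (nat \<times> nat) set \<Rightarrow> nat list \<Rightarrow> bool" where
  "walk n G xs \<longleftrightarrow> xs \<noteq> [] \<and> set xs \<subseteq> {1..n} \<and> successively (\<lambda>x y. (x, y) \<in> G) xs"

definition closed_walk :: "nat \<Rightarrow> (nat \<times> nat) set \<Rightarrow> nat list \<Rightarrow> bool" where
  "closed_walk n G c \<longleftrightarrow> walk n G c \<and> 2 \<le> length c \<and> hd c = last c"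

fun walk_weight :: "(nat \<Rightarrow> nat \<Rightarrow> real) \<Rightarrow> nat list \<Rightarrow> real" where
  "walk_weight a (x # y # xs) = a x y + walk_weight a (y # xs)"
| "walk_weight a _ = 0"

definition shifted_weight :: "(nat \<Rightarrow> nat \<Rightarrow> real) \<Rightarrow> real \<Rightarrow> nat list \<Rightarrow> real" where
  "shifted_weight a l xs = walk_weight a xs - l * real (length xs - 1)"

lemma walk_weight_append:
  "walk_weight a (xs @ y # ys) = walk_weight a (xs @ [y]) + walk_weight a (y # ys)"
  by (induction xs rule: induct_list012) auto

lemma walk_weight_snoc: "xs \<noteq> [] \<Longrightarrow> walk_weight a (xs @ [y]) = walk_weight a xs + a (last xs) y"
  by (induction xs rule: induct_list012) auto

lemma shifted_weight_snoc:
  "xs \<noteq> [] \<Longrightarrow> shifted_weight a l (xs @ [y]) = shifted_weight a l xs + a (last xs) y - l"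
  unfolding shifted_weight_def using walk_weight_snoc[of xs a y] by (cases xs) (auto simp: algebra_simps)

lemma shifted_weight_remove_loop:
  "shifted_weight a l (as @ [y] @ bs @ [y] @ cs)
     = shifted_weight a l (as @ [y] @ cs) + shifted_weight a l (y # bs @ [y])"
  using walk_weight_append[of a as y "bs @ y # cs"] walk_weight_append[of a "y # bs" y cs]
    walk_weight_append[of a as y cs]
  by (simp add: shifted_weight_def algebra_simps)

lemma walk_remove_loop: "walk n G (as @ [y] @ bs @ [y] @ cs) \<Longrightarrow> walk n G (as @ [y] @ cs)"
  unfolding walk_def by (auto simp: successively_append_iff successively_Cons)

lemma closed_walk_loop:
  assumes "walk n G (as @ [y] @ bs @ [y] @ cs)"
  shows "closed_walk n G (y # bs @ [y])"
proof -
  have "successively (\<lambda>x y. (x, y) \<in> G) (as @ (y # bs @ [y]) @ cs)"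
    using assms by (simp add: walk_def)
  then have "successively (\<lambda>x y. (x, y) \<in> G) (y # bs @ [y])"
    by (simp only: successively_append_iff)
  then show ?thesis using assms by (auto simp: closed_walk_def walk_def)
qed

lemma walk_snoc_iff:
  "xs \<noteq> [] \<Longrightarrow> walk n G (xs @ [y]) \<longleftrightarrow> walk n G xs \<and> (last xs, y) \<in> G \<and> y \<in> {1..n}"
  unfolding walk_def by (auto simp: successively_append_iff)

lemma walk_has_loop:
  assumes "set xs \<subseteq> {1..n}" "n < length xs"
  obtains as y bs cs where "xs = as @ [y] @ bs @ [y] @ cs"
proof -
  have "card (set xs) \<le> n"
    using card_mono[OF finite_atLeastAtMost assms(1)] by simp
  then have "\<not> distinct xs"
    using assms(2) distinct_card by fastforce
  then show ?thesis using not_distinct_decomp that by blast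
qed

lemma finite_walks: "finite {xs. walk n G xs \<and> P xs \<and> length xs \<le> m}"
  by (rule finite_subset[OF _ finite_lists_length_le[OF finite_atLeastAtMost[of 1 n], of m]])
     (auto simp: walk_def)

lemma rtrancl_imp_walk:
  assumes "digraph_on n G" "(x, y) \<in> G\<^sup>*" "x \<in> {1..n}"
  shows "\<exists>xs. walk n G xs \<and> hd xs = x \<and> last xs = y"
  using assms(2)
proof (induction rule: rtrancl_induct)
  case base
  then show ?case using assms(3) by (intro exI[of _ "[x]"]) (simp add: walk_def)
next
  case (step y z)
  then obtain xs where xs: "walk n G xs" "hd xs = x" "last xs = y" by blast
  moreover have "xs \<noteq> []" using xs(1) by (simp add: walk_def)
  moreover have "z \<in> {1..n}" using step(2) assms(1) by (auto simp: digraph_on_def)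
  ultimately show ?case using step(2) by (intro exI[of _ "xs @ [z]"]) (simp add: walk_snoc_iff)
qed

lemma closed_walk_split:
  assumes "closed_walk n G c" "n + 1 < length c"
  obtains c1 c2 where "closed_walk n G c1" "closed_walk n G c2"
    "length c1 < length c" "length c2 < length c"
    "\<And>a l. shifted_weight a l c = shifted_weight a l c1 + shifted_weight a l c2"
proof -
  obtain z t where c: "c = z # t" using assms(1) by (cases c) (auto simp: closed_walk_def)
  have "set t \<subseteq> {1..n}" "n < length t"
    using assms c by (auto simp: closed_walk_def walk_def)
  then obtain as y bs cs where "t = as @ [y] @ bs @ [y] @ cs"
    by (rule walk_has_loop)
  then have c_eq: "c = (z # as) @ [y] @ bs @ [y] @ cs" using c by simp
  have walk_c: "walk n G ((z # as) @ [y] @ bs @ [y] @ cs)"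
    using assms(1) unfolding c_eq closed_walk_def by blast
  have "hd c = last c" using assms(1) by (simp add: closed_walk_def)
  then have "closed_walk n G ((z # as) @ [y] @ cs)"
    using walk_remove_loop[OF walk_c] c_eq by (cases cs) (simp_all add: closed_walk_def)
  moreover have "closed_walk n G (y # bs @ [y])"
    using closed_walk_loop[OF walk_c] .
  moreover have "shifted_weight a l c
      = shifted_weight a l ((z # as) @ [y] @ cs) + shifted_weight a l (y # bs @ [y])" for a l
    unfolding c_eq by (rule shifted_weight_remove_loop)
  ultimately show ?thesis using that c_eq by simp
qed

lemma closed_walk_shifted_weight_nonpos:
  assumes short: "\<And>c. closed_walk n G c \<Longrightarrow> length c \<le> n + 1 \<Longrightarrow> shifted_weight a l c \<le> 0"
  shows "closed_walk n G c \<Longrightarrow> shifted_weight a l c \<le> 0"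
proof (induction "length c" arbitrary: c rule: less_induct)
  case less
  show ?case
  proof (cases "length c \<le> n + 1")
    case True
    then show ?thesis using short less.prems by blast
  next
    case False
    then obtain c1 c2 where "closed_walk n G c1" "closed_walk n G c2"
      "length c1 < length c" "length c2 < length c"
      "shifted_weight a l c = shifted_weight a l c1 + shifted_weight a l c2"
      using closed_walk_split[OF less.prems] by (metis not_le)
    with less.hyps show ?thesis by (metis add_nonpos_nonpos)
  qed
qed

lemma short_closed_walk_exists:
  "closed_walk n G c \<Longrightarrow> \<exists>c'. closed_walk n G c' \<and> length c' \<le> n + 1"
proof (induction "length c" arbitrary: c rule: less_induct)
  case less
  show ?case
  proof (cases "length c \<le> n + 1")
    case True
    then show ?thesis using less.prems by blast
  next
    case False
    then obtain c1 where "closed_walk n G c1" "length c1 < length c"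
      using closed_walk_split[OF less.prems] by (metis not_le)
    then show ?thesis using less.hyps by blast
  qed
qed

lemma walk_shorten:
  assumes cycles: "\<And>c. closed_walk n G c \<Longrightarrow> shifted_weight a l c \<le> 0"
  shows "walk n G xs \<Longrightarrow> \<exists>ys. walk n G ys \<and> hd ys = hd xs \<and> last ys = last xs
           \<and> length ys \<le> n \<and> shifted_weight a l xs \<le> shifted_weight a l ys"
proof (induction "length xs" arbitrary: xs rule: less_induct)
  case less
  show ?case
  proof (cases "length xs \<le> n")
    case True
    then show ?thesis using less.prems by blast
  next
    case False
    moreover have "set xs \<subseteq> {1..n}" using less.prems by (simp add: walk_def)
    ultimately obtain as y bs cs where xs: "xs = as @ [y] @ bs @ [y] @ cs"
      using walk_has_loop by (metis not_le)
    let ?xs' = "as @ [y] @ cs"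
    have walk_xs: "walk n G (as @ [y] @ bs @ [y] @ cs)" using less.prems xs by simp
    obtain ys where ys: "walk n G ys" "hd ys = hd ?xs'" "last ys = last ?xs'" "length ys \<le> n"
        "shifted_weight a l ?xs' \<le> shifted_weight a l ys"
      using less.hyps[of ?xs'] walk_remove_loop[OF walk_xs] xs by auto
    have "shifted_weight a l xs \<le> shifted_weight a l ?xs'"
      using shifted_weight_remove_loop[of a l as y bs cs] cycles[OF closed_walk_loop[OF walk_xs]] xs
      by simp
    moreover have "hd ?xs' = hd xs" using xs by (cases as) auto
    moreover have "last ?xs' = last xs" using xs by (cases cs) auto
    ultimately show ?thesis using ys by fastforce
  qed
qed

lemma closed_walk_through_edge:
  assumes dg: "digraph_on n G" and sc: "strongly_connected n G" and uv: "(u, v) \<in> G"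
  shows "\<exists>c. closed_walk n G c"
proof -
  have "u \<in> {1..n}" "v \<in> {1..n}" using uv dg by (auto simp: digraph_on_def)
  then obtain xs where xs: "walk n G xs" "hd xs = v" "last xs = u"
    using rtrancl_imp_walk[OF dg] sc by (meson strongly_connected_def)
  moreover have "xs \<noteq> []" using xs(1) by (simp add: walk_def)
  ultimately have "walk n G (xs @ [v])" using uv \<open>v \<in> {1..n}\<close> by (simp add: walk_snoc_iff)
  then have "closed_walk n G (xs @ [v])"
    using xs \<open>xs \<noteq> []\<close> by (cases xs) (auto simp: closed_walk_def)
  then show ?thesis by blast
qed

(* l is the maximal mean weight of a closed walk; by closed_walk_split it suffices to take the
   maximum over the finitely many closed walks with at most n edges. *)
lemma critical_closed_walk_exists:
  assumes "closed_walk n G c0"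
  obtains c l where "closed_walk n G c" "shifted_weight a l c = 0"
    "\<And>c'. closed_walk n G c' \<Longrightarrow> shifted_weight a l c' \<le> 0"
proof -
  define C where "C = {c. closed_walk n G c \<and> length c \<le> n + 1}"
  define mean where "mean c = walk_weight a c / real (length c - 1)" for c
  define l where "l = Max (mean ` C)"
  have "finite C" unfolding C_def closed_walk_def
    by (rule finite_subset[OF _ finite_walks[of n G "\<lambda>c. 2 \<le> length c \<and> hd c = last c" "n + 1"]])
      auto
  then have fin: "finite (mean ` C)" by simp
  have "C \<noteq> {}" using short_closed_walk_exists[OF assms] unfolding C_def by blast
  then have "l \<in> mean ` C" unfolding l_def using fin by simp
  then obtain c where c: "closed_walk n G c" "mean c = l" unfolding C_def by blast
  have short_nonpos: "shifted_weight a l c' \<le> 0"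
    if "closed_walk n G c'" "length c' \<le> n + 1" for c'
  proof -
    have "mean c' \<le> l" unfolding l_def using fin that by (simp add: C_def)
    moreover have "0 < real (length c' - 1)" using that by (auto simp: closed_walk_def)
    ultimately show ?thesis by (simp add: mean_def shifted_weight_def divide_le_eq)
  qed
  have "0 < real (length c - 1)" using c(1) by (auto simp: closed_walk_def)
  then have "shifted_weight a l c = 0" using c(2) by (simp add: mean_def shifted_weight_def field_simps)
  then show thesis
    using that c(1) closed_walk_shifted_weight_nonpos[OF short_nonpos] by blast
qed

(* Walks with fewer than n edges suffice by walk_shorten, which keeps the maximum finite. *)
definition walk_potential ::
  "nat \<Rightarrow> (nat \<times> nat) set \<Rightarrow> (nat \<Rightarrow> nat \<Rightarrow> real) \<Rightarrow> real \<Rightarrow> nat \<Rightarrow> nat \<Rightarrow> real" where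
  "walk_potential n G a l z v =
     Max (shifted_weight a l ` {ys. walk n G ys \<and> (hd ys = z \<and> last ys = v) \<and> length ys \<le> n})"

context
  fixes n G a l
  assumes closed_walks_nonpos: "\<And>c. closed_walk n G c \<Longrightarrow> shifted_weight a l c \<le> 0"
begin

lemma shifted_weight_le_walk_potential:
  assumes "walk n G xs"
  shows "shifted_weight a l xs \<le> walk_potential n G a l (hd xs) (last xs)"
proof -
  let ?W = "{ys. walk n G ys \<and> (hd ys = hd xs \<and> last ys = last xs) \<and> length ys \<le> n}"
  obtain ys where "ys \<in> ?W" and le: "shifted_weight a l xs \<le> shifted_weight a l ys"
    using walk_shorten[OF closed_walks_nonpos assms] by blast
  moreover have "finite ?W" by (rule finite_walks)
  ultimately have "shifted_weight a l ys \<le> Max (shifted_weight a l ` ?W)" by simp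
  then show ?thesis unfolding walk_potential_def using le by linarith
qed

lemma walk_potential_attained:
  assumes "walk n G xs"
  obtains ys where "walk n G ys" "hd ys = hd xs" "last ys = last xs"
    "shifted_weight a l ys = walk_potential n G a l (hd xs) (last xs)"
proof -
  let ?W = "{ys. walk n G ys \<and> (hd ys = hd xs \<and> last ys = last xs) \<and> length ys \<le> n}"
  have "?W \<noteq> {}" using walk_shorten[OF closed_walks_nonpos assms] by blast
  moreover have "finite ?W" by (rule finite_walks)
  ultimately have "walk_potential n G a l (hd xs) (last xs) \<in> shifted_weight a l ` ?W"
    unfolding walk_potential_def by (intro Max_in finite_imageI) simp_all
  then show thesis using that by auto
qed

lemma walk_potential_edge:
  assumes "walk n G xs" "(last xs, y) \<in> G" "y \<in> {1..n}"
  shows "walk_potential n G a l (hd xs) (last xs) + a (last xs) y - l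
         \<le> walk_potential n G a l (hd xs) y"
proof -
  obtain ys where ys: "walk n G ys" "hd ys = hd xs" "last ys = last xs"
      "shifted_weight a l ys = walk_potential n G a l (hd xs) (last xs)"
    using walk_potential_attained[OF assms(1)] by blast
  have ne: "ys \<noteq> []" using ys(1) by (simp add: walk_def)
  then have "walk n G (ys @ [y])" using ys(1,3) assms(2,3) by (simp add: walk_snoc_iff)
  then have "shifted_weight a l (ys @ [y]) \<le> walk_potential n G a l (hd xs) y"
    using shifted_weight_le_walk_potential ne ys(2) by fastforce
  moreover have "shifted_weight a l (ys @ [y]) = shifted_weight a l ys + a (last xs) y - l"
    using shifted_weight_snoc[OF ne] ys(3) by simp
  ultimately show ?thesis using ys(4) by linarith
qed

lemma walk_potential_tight:
  assumes "walk n G xs" "2 \<le> length xs"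
  obtains x where "(x, last xs) \<in> G"
    "shifted_weight a l xs \<le> walk_potential n G a l (hd xs) x + a x (last xs) - l"
proof -
  define ys where "ys = butlast xs"
  define v where "v = last xs"
  have "xs \<noteq> []" using assms(2) by auto
  then have "xs = ys @ [v]" by (simp add: ys_def v_def)
  moreover have "ys \<noteq> []" using assms(2) by (simp add: ys_def flip: length_greater_0_conv)
  ultimately have xs: "xs = ys @ [v]" "ys \<noteq> []" by simp_all
  then have "walk n G ys" "(last ys, v) \<in> G" using assms(1) by (simp_all add: walk_snoc_iff)
  moreover have "hd ys = hd xs" using xs by simp
  ultimately have "shifted_weight a l xs \<le> walk_potential n G a l (hd xs) (last ys) + a (last ys) v - l"
    using shifted_weight_le_walk_potential[of ys] shifted_weight_snoc[of ys a l v] xs by simp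
  then show thesis using that \<open>(last ys, v) \<in> G\<close> xs by simp
qed

lemma walk_potential_self_nonpos:
  assumes "z \<in> {1..n}"
  shows "walk_potential n G a l z z \<le> 0"
proof -
  have "walk n G [z]" using assms by (simp add: walk_def)
  then obtain ys where ys: "walk n G ys" "hd ys = z" "last ys = z"
      "shifted_weight a l ys = walk_potential n G a l z z"
    by (rule walk_potential_attained) simp
  show ?thesis
  proof (cases "2 \<le> length ys")
    case True
    then have "closed_walk n G ys" using ys(1-3) by (simp add: closed_walk_def)
    then show ?thesis using closed_walks_nonpos ys(4) by fastforce
  next
    case False
    moreover have "ys \<noteq> []" using ys(1) by (simp add: walk_def)
    ultimately obtain q where "ys = [q]" by (cases ys) (auto simp: Suc_le_eq)
    then show ?thesis using ys(4) by (simp add: shifted_weight_def)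
  qed
qed

end

lemma tight_potential_exists:
  fixes a :: "nat \<Rightarrow> nat \<Rightarrow> real"
  assumes dg: "digraph_on n G" and sc: "strongly_connected n G" and "G \<noteq> {}"
  obtains p l where "\<And>x y. (x, y) \<in> G \<Longrightarrow> p x + a x y - l \<le> p y"
    "\<And>v. v \<in> {1..n} \<Longrightarrow> \<exists>x. (x, v) \<in> G \<and> p v \<le> p x + a x v - l"
proof -
  obtain u v where "(u, v) \<in> G" using assms(3) by auto
  then obtain c0 where "closed_walk n G c0" using closed_walk_through_edge dg sc by blast
  then obtain c l where c: "closed_walk n G c" "shifted_weight a l c = 0"
    and cycles: "\<And>c'. closed_walk n G c' \<Longrightarrow> shifted_weight a l c' \<le> 0"
    using critical_closed_walk_exists[where a = a] by blast
  define z where "z = hd c"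
  define p where "p = walk_potential n G a l z"
  have z: "z \<in> {1..n}" using c(1) unfolding z_def closed_walk_def walk_def by (cases c) auto
  have reach: "\<exists>xs. walk n G xs \<and> hd xs = z \<and> last xs = v" if "v \<in> {1..n}" for v
    using rtrancl_imp_walk[OF dg _ z] sc that z unfolding strongly_connected_def by blast
  have edge: "p x + a x y - l \<le> p y" if "(x, y) \<in> G" for x y
  proof -
    have "x \<in> {1..n}" "y \<in> {1..n}" using that dg by (auto simp: digraph_on_def)
    then obtain xs where "walk n G xs" "hd xs = z" "last xs = x" using reach by blast
    then show ?thesis
      using walk_potential_edge[OF cycles, where xs = xs and y = y] that \<open>y \<in> {1..n}\<close> by (simp add: p_def)
  qed
  have best: "\<exists>ys. walk n G ys \<and> 2 \<le> length ys \<and> hd ys = z \<and> last ys = v \<and> p v \<le> shifted_weight a l ys"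
    if v: "v \<in> {1..n}" for v
  proof (cases "v = z")
    case True
    then show ?thesis
      using c walk_potential_self_nonpos[OF cycles z] by (auto simp: closed_walk_def p_def z_def)
  next
    case False
    obtain xs where xs: "walk n G xs" "hd xs = z" "last xs = v" using reach v by blast
    obtain ys where ys: "walk n G ys" "hd ys = z" "last ys = v" "shifted_weight a l ys = p v"
      using walk_potential_attained[OF cycles xs(1)] xs(2,3) unfolding p_def by metis
    have "ys \<noteq> []" using ys(1) by (simp add: walk_def)
    then have "2 \<le> length ys" using False ys(2,3) by (cases ys) (auto simp: Suc_le_eq split: if_splits)
    then show ?thesis using ys by auto
  qed
  have "\<exists>x. (x, v) \<in> G \<and> p v \<le> p x + a x v - l" if v: "v \<in> {1..n}" for v
  proof -
    obtain ys where ys: "walk n G ys" "2 \<le> length ys" "hd ys = z" "last ys = v"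
        "p v \<le> shifted_weight a l ys"
      using best[OF v] by blast
    obtain x where "(x, v) \<in> G" "shifted_weight a l ys \<le> p x + a x v - l"
      using walk_potential_tight[OF cycles ys(1,2)] ys(3,4) unfolding p_def by blast
    then show ?thesis using ys(5) by force
  qed
  with edge show thesis using that by blast
qed

definition reweight :: "(nat \<Rightarrow> nat \<Rightarrow> real) \<Rightarrow> (nat \<Rightarrow> real) \<Rightarrow> nat \<Rightarrow> nat \<Rightarrow> real" where
  "reweight a p x y = a x y + p y - p x"

lemma finite_if_digraph_on: "digraph_on n G \<Longrightarrow> finite G"
  unfolding digraph_on_def by (erule finite_subset) (simp add: finite_cartesian_product)

lemma finite_in_weights: "finite G \<Longrightarrow> finite {a u v | u. (u, v) \<in> G}"
  by (rule finite_subset[of _ "(\<lambda>(x, y). a x y) ` G"]) force+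

lemma finite_out_weights: "finite G \<Longrightarrow> finite {a v w | w. (v, w) \<in> G}"
  by (rule finite_subset[of _ "(\<lambda>(x, y). a x y) ` G"]) force+

lemma alpha_in_ge: "finite G \<Longrightarrow> (u, v) \<in> G \<Longrightarrow> a u v \<le> alpha_in G a v"
  unfolding alpha_in_def by (rule Max_ge[OF finite_in_weights]) auto

lemma alpha_out_ge: "finite G \<Longrightarrow> (v, w) \<in> G \<Longrightarrow> a v w \<le> alpha_out G a v"
  unfolding alpha_out_def by (rule Max_ge[OF finite_out_weights]) auto

lemma alpha_in_le:
  "finite G \<Longrightarrow> (u, v) \<in> G \<Longrightarrow> (\<And>u. (u, v) \<in> G \<Longrightarrow> a u v \<le> c) \<Longrightarrow> alpha_in G a v \<le> c"
  unfolding alpha_in_def by (rule Max.boundedI[OF finite_in_weights]) auto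

lemma alpha_out_le:
  "finite G \<Longrightarrow> (v, w) \<in> G \<Longrightarrow> (\<And>w. (v, w) \<in> G \<Longrightarrow> a v w \<le> c) \<Longrightarrow> alpha_out G a v \<le> c"
  unfolding alpha_out_def by (rule Max.boundedI[OF finite_out_weights]) auto

lemma in_edge_iff_out_edge:
  assumes dg: "digraph_on n G" and sc: "strongly_connected n G" and v: "v \<in> {1..n}"
  shows "(\<exists>u. (u, v) \<in> G) \<longleftrightarrow> (\<exists>w. (v, w) \<in> G)"
proof
  assume "\<exists>u. (u, v) \<in> G"
  then obtain u where uv: "(u, v) \<in> G" by blast
  then have "(v, u) \<in> G\<^sup>*" using dg sc v by (auto simp: digraph_on_def strongly_connected_def)
  then show "\<exists>w. (v, w) \<in> G"
  proof (cases rule: converse_rtranclE)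
    case base
    then show ?thesis using uv by blast
  next
    case (step w)
    then show ?thesis by blast
  qed
next
  assume "\<exists>w. (v, w) \<in> G"
  then obtain w where vw: "(v, w) \<in> G" by blast
  then have "(w, v) \<in> G\<^sup>*" using dg sc v by (auto simp: digraph_on_def strongly_connected_def)
  then show "\<exists>u. (u, v) \<in> G"
  proof (cases rule: rtranclE)
    case base
    then show ?thesis using vw by blast
  next
    case (step u)
    then show ?thesis by blast
  qed
qed

lemma balanced_potential_exists:
  assumes dg: "digraph_on n G" and sc: "strongly_connected n G"
  obtains B where "\<And>v. v \<in> {1..n} \<Longrightarrow> 0 \<le> B v"
    "\<And>v. v \<in> {1..n} \<Longrightarrow> alpha_out G (reweight a B) v \<le> alpha_in G (reweight a B) v"
proof (cases "G = {}")
  case True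
  show thesis
    by (rule that[of "\<lambda>_. 0"]) (simp_all add: alpha_in_def alpha_out_def True)
next
  case False
  obtain p l where edge: "\<And>x y. (x, y) \<in> G \<Longrightarrow> p x + a x y - l \<le> p y"
    and tight: "\<And>v. v \<in> {1..n} \<Longrightarrow> \<exists>x. (x, v) \<in> G \<and> p v \<le> p x + a x v - l"
    using tight_potential_exists[OF dg sc False, where a = a] by blast
  define B where "B v = Max (p ` {1..n}) - p v" for v
  have reweight_B: "reweight a B x y = a x y + p x - p y" for x y
    by (simp add: reweight_def B_def)
  have "alpha_out G (reweight a B) v \<le> alpha_in G (reweight a B) v" if v: "v \<in> {1..n}" for v
  proof -
    obtain x where x: "(x, v) \<in> G" "p v \<le> p x + a x v - l" using tight[OF v] by blast
    then obtain w where "(v, w) \<in> G" using in_edge_iff_out_edge[OF dg sc v] by blast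
    then have "alpha_out G (reweight a B) v \<le> l"
    proof (rule alpha_out_le[OF finite_if_digraph_on[OF dg]])
      show "reweight a B v w' \<le> l" if "(v, w') \<in> G" for w'
        using edge[OF that] by (simp add: reweight_B)
    qed
    also have "l \<le> reweight a B x v" using x(2) by (simp add: reweight_B)
    also have "\<dots> \<le> alpha_in G (reweight a B) v" by (rule alpha_in_ge[OF finite_if_digraph_on[OF dg] x(1)])
    finally show ?thesis .
  qed
  moreover have "0 \<le> B v" if "v \<in> {1..n}" for v
    using that by (simp add: B_def)
  ultimately show thesis using that by blast
qed

lemma rhoR_le_of_near_balanced:
  assumes fin: "finite G" and in_out: "(\<exists>u. (u, v) \<in> G) \<longleftrightarrow> (\<exists>w. (v, w) \<in> G)"
    and near_in: "\<And>u. (u, v) \<in> G \<Longrightarrow> b u v - d \<le> a u v"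
    and near_out: "\<And>w. (v, w) \<in> G \<Longrightarrow> a v w \<le> b v w + d"
    and balanced: "alpha_out G b v \<le> alpha_in G b v" and "0 \<le> d"
  shows "rhoR G a v \<le> 2 * d"
proof (cases "\<exists>w. (v, w) \<in> G")
  case False
  then have "alpha_out G a v = alpha_in G a v" using in_out by (simp add: alpha_in_def alpha_out_def)
  then show ?thesis using \<open>0 \<le> d\<close> by (simp add: rhoR_def)
next
  case True
  then obtain u w where uv: "(u, v) \<in> G" and vw: "(v, w) \<in> G" using in_out by blast
  have "alpha_out G a v \<le> alpha_out G b v + d"
    using near_out alpha_out_ge[OF fin] by (intro alpha_out_le[OF fin vw]) (meson add_right_mono order_trans)
  moreover have "alpha_in G b v \<le> alpha_in G a v + d"
    using near_in alpha_in_ge[OF fin] by (intro alpha_in_le[OF fin uv]) (meson diff_le_eq order_trans)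
  ultimately show ?thesis using balanced \<open>0 \<le> d\<close> by (simp add: rhoR_def)
qed

lemma rhoR_nonneg: "0 \<le> rhoR G a v"
  by (simp add: rhoR_def)

lemma alpha_seq_eq_reweight:
  "(x, y) \<in> G \<Longrightarrow> alpha_seq G \<alpha> s t x y = reweight \<alpha> (r_seq G \<alpha> s t) x y"
proof (induction t)
  case 0
  then show ?case by (simp add: reweight_def)
next
  case (Suc t)
  let ?a = "alpha_seq G \<alpha> s t" and ?v = "s (Suc t)"
  show ?case
  proof (cases "0 < rhoR G ?a ?v")
    case True
    then show ?thesis using Suc by (auto simp: raise_def reweight_def)
  next
    case False
    then have "rhoR G ?a ?v = 0" using rhoR_nonneg[of G ?a ?v] by linarith
    then show ?thesis using Suc by (simp add: raise_def reweight_def)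
  qed
qed

lemma r_seq_mono: "mono (\<lambda>t. r_seq G \<alpha> s t v)"
  by (rule incseq_SucI) (simp add: rhoR_nonneg)

lemma r_seq_le_balanced_potential:
  assumes dg: "digraph_on n G" and sc: "strongly_connected n G"
    and s: "\<And>t. s (Suc t) \<in> {1..n}"
    and B_nonneg: "\<And>v. v \<in> {1..n} \<Longrightarrow> 0 \<le> B v"
    and balanced: "\<And>v. v \<in> {1..n} \<Longrightarrow> alpha_out G (reweight \<alpha> B) v \<le> alpha_in G (reweight \<alpha> B) v"
  shows "v \<in> {1..n} \<Longrightarrow> r_seq G \<alpha> s t v \<le> B v"
proof (induction t arbitrary: v)
  case 0
  then show ?case using B_nonneg by simp
next
  case (Suc t)
  let ?r = "r_seq G \<alpha> s t" and ?u = "s (Suc t)"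
  have endpoints: "x \<in> {1..n}" "y \<in> {1..n}" if "(x, y) \<in> G" for x y
    using that dg by (auto simp: digraph_on_def)
  \<comment> \<open>Because ?r is below B at the neighbours of ?u, alpha(t) is within B ?u - ?r ?u of the
      balanced function on the edges at ?u.\<close>
  have "rhoR G (alpha_seq G \<alpha> s t) ?u \<le> 2 * (B ?u - ?r ?u)"
  proof (rule rhoR_le_of_near_balanced[OF finite_if_digraph_on[OF dg] in_edge_iff_out_edge[OF dg sc s]])
    show "reweight \<alpha> B x ?u - (B ?u - ?r ?u) \<le> alpha_seq G \<alpha> s t x ?u" if "(x, ?u) \<in> G" for x
      using that Suc.IH[OF endpoints(1)[OF that]] by (simp add: alpha_seq_eq_reweight reweight_def)
    show "alpha_seq G \<alpha> s t ?u y \<le> reweight \<alpha> B ?u y + (B ?u - ?r ?u)" if "(?u, y) \<in> G" for y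
      using that Suc.IH[OF endpoints(2)[OF that]] by (simp add: alpha_seq_eq_reweight reweight_def)
    show "alpha_out G (reweight \<alpha> B) ?u \<le> alpha_in G (reweight \<alpha> B) ?u" by (rule balanced[OF s])
    show "0 \<le> B ?u - ?r ?u" using Suc.IH[OF s] by simp
  qed
  then show ?case using Suc by auto
qed

theorem lemma1:
  fixes n :: nat and G :: "(nat \<times> nat) set" and \<alpha> :: "nat \<Rightarrow> nat \<Rightarrow> real" and s :: "nat \<Rightarrow> nat"
  assumes "digraph_on n G" and "strongly_connected n G" and "fair n s"
  shows "(\<forall>v\<in>{1..n}. mono (\<lambda>t. r_seq G \<alpha> s t v))
       \<and> (\<forall>v\<in>{1..n}. \<exists>B. \<forall>t. r_seq G \<alpha> s t v \<le> B)
       \<and> (\<exists>rstar :: nat \<Rightarrow> real. \<forall>v\<in>{1..n}. (\<lambda>t. r_seq G \<alpha> s t v) \<longlonglongrightarrow> rstar v)"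
proof -
  have s: "s (Suc t) \<in> {1..n}" for t using \<open>fair n s\<close> by (simp add: fair_def)
  obtain B where B_nonneg: "\<And>v. v \<in> {1..n} \<Longrightarrow> 0 \<le> B v"
    and balanced: "\<And>v. v \<in> {1..n} \<Longrightarrow> alpha_out G (reweight \<alpha> B) v \<le> alpha_in G (reweight \<alpha> B) v"
    using balanced_potential_exists[OF assms(1,2)] by blast
  have bounded: "r_seq G \<alpha> s t v \<le> B v" if "v \<in> {1..n}" for t v
    by (rule r_seq_le_balanced_potential[where s = s, OF assms(1,2) s B_nonneg balanced that])
  have "(\<lambda>t. r_seq G \<alpha> s t v) \<longlonglongrightarrow> (SUP t. r_seq G \<alpha> s t v)" if "v \<in> {1..n}" for v
    using bounded[OF that] by (intro LIMSEQ_incseq_SUP r_seq_mono bdd_aboveI2) 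
  with bounded r_seq_mono show ?thesis
    by (intro conjI ballI exI[of _ "\<lambda>v. SUP t. r_seq G \<alpha> s t v"]) blast+
qed

end
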